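(* Let $(\mathcal{A},\mathcal{E})$ be a finite, essentially small exact category and $X$ indecomposable. A chain $X_1\subsetneq_\mathcal{E}X_2\subsetneq_\mathcal{E}\cdots\subsetneq_\mathcal{E}X_n=X$ of indecomposable objects is an $\mathcal{E}$-Gabriel–Roiter filtration of $X$ if and only if it is a $\mu_\mathcal{E}$-filtration of $X$.
   Context: $(\mathcal{A},\mathcal{E})$ is a Quillen exact category; admissible monics are morphisms $i$ with $(i,d)\in\mathcal{E}$ for some $d$. $X\subsetneq_\mathcal{E}Y$ means there is an admissible monic $X\to Y$ that is not an isomorphism. A nonzero object $S$ is $\mathcal{E}$-simple if every object admitting an admissible monic into $S$ is zero or isomorphic to $S$. The $\mathcal{E}$-length $l_\mathcal{E}(X)$ is the supremum of all $n$ such that there is a chain $0=X_0\to\cdots\to X_n=X$ of admissible monics none of which is an isomorphism; $(\mathcal{A},\mathcal{E})$ is finite if $l_\mathcal{E}(X)<\infty$ for all $X$. $\mathfrak{S}(\mathbb{N})$ is the set of finite nonempty sequences of natural numbers, totally ordered by: $x\lll y$ iff $x=y$, or $x$ is a proper prefix of $y$, or at the first index $i$ where $x_i\neq y_i$ (both defined) one has $x_i>y_i$. For indecomposable $X$, $\mu_\mathcal{E}(X)$ is the $\lll$-maximum of $(l_\mathcal{E}(X_1),\dots,l_\mathcal{E}(X_n))$ over all chains $X_1\subsetneq_\mathcal{E}\cdots\subsetneq_\mathcal{E}X_n=X$ ($n\ge1$) with all $X_i$ indecomposable. A chain of indecomposables $X_1\subsetneq_\mathcal{E}\cdots\subsetneq_\mathcal{E}X_n=X$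 is a $\mu_\mathcal{E}$-filtration of $X$ if for all $i$, $\mu_\mathcal{E}(X_i)$ equals the prefix of length $i$ of $\mu_\mathcal{E}(X)$. For indecomposables $X,Y$, $X$ is an $\mathcal{E}$-Gabriel–Roiter predecessor of $Y$ if $X\subsetneq_\mathcal{E}Y$ and $\mu_\mathcal{E}(X)=\max\{\mu_\mathcal{E}(Y') : Y'\text{ indecomposable},\ Y'\subsetneq_\mathcal{E}Y\}$. A chain of indecomposables $X_1\subsetneq_\mathcal{E}\cdots\subsetneq_\mathcal{E}X_n=X$ is an $\mathcal{E}$-Gabriel–Roiter filtration of $X$ if $X_1$ is $\mathcal{E}$-simple and $X_{i-1}$ is an $\mathcal{E}$-Gabriel–Roiter predecessor of $X_i$ for all $2\le i\le n$. *)

theory Defs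
  imports Main "HOL-Library.Extended_Nat" "HOL-Library.Sublist"
begin

record ('o,'m) addcat =
  Obj   :: "'o set"
  Arr   :: "'m set"
  Dom   :: "'m \<Rightarrow> 'o"
  Cod   :: "'m \<Rightarrow> 'o"
  Comp  :: "'m \<Rightarrow> 'm \<Rightarrow> 'm"   (* Comp C g f = g after f *)
  Ident :: "'o \<Rightarrow> 'm"
  Add   :: "'m \<Rightarrow> 'm \<Rightarrow> 'm"
  Neg   :: "'m \<Rightarrow> 'm"
  Zer   :: "'o \<Rightarrow> 'o \<Rightarrow> 'm"   (* zero morphism A \<rightarrow> B *)

definition hom :: "('o,'m) addcat \<Rightarrow> 'o \<Rightarrow> 'o \<Rightarrow> 'm set" where
  "hom C A B = {f \<in> Arr C. Dom C f = A \<and> Cod C f = B}"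

definition is_category :: "('o,'m) addcat \<Rightarrow> bool" where
  "is_category C \<longleftrightarrow>
     (\<forall>f \<in> Arr C. Dom C f \<in> Obj C \<and> Cod C f \<in> Obj C) \<and>
     (\<forall>A \<in> Obj C. Ident C A \<in> hom C A A) \<and>
     (\<forall>f \<in> Arr C. \<forall>g \<in> Arr C. Cod C f = Dom C g \<longrightarrow>
          Comp C g f \<in> hom C (Dom C f) (Cod C g)) \<and>
     (\<forall>f \<in> Arr C. Comp C (Ident C (Cod C f)) f = f \<and> Comp C f (Ident C (Dom C f)) = f) \<and>
     (\<forall>f \<in> Arr C. \<forall>g \<in> Arr C. \<forall>h \<in> Arr C. Cod C f = Dom C g \<longrightarrow> Cod C g = Dom C h \<longrightarrow>
          Comp C h (Comp C g f) = Comp C (Comp C h g) f)"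

definition is_preadditive :: "('o,'m) addcat \<Rightarrow> bool" where
  "is_preadditive C \<longleftrightarrow> is_category C \<and>
     (\<forall>A \<in> Obj C. \<forall>B \<in> Obj C.
        Zer C A B \<in> hom C A B \<and>
        (\<forall>f \<in> hom C A B. \<forall>g \<in> hom C A B.
            Add C f g \<in> hom C A B \<and> Add C f g = Add C g f) \<and>
        (\<forall>f \<in> hom C A B. \<forall>g \<in> hom C A B. \<forall>h \<in> hom C A B.
            Add C (Add C f g) h = Add C f (Add C g h)) \<and>
        (\<forall>f \<in> hom C A B. Add C f (Zer C A B) = f \<and>
            Neg C f \<in> hom C A B \<and> Add C f (Neg C f) = Zer C A B)) \<and>
     (\<forall>A \<in> Obj C. \<forall>B \<in> Obj C. \<forall>D \<in> Obj C.
        \<forall>f \<in> hom C A B. \<forall>g \<in> hom C A B. \<forall>h \<in> hom C B D.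
          Comp C h (Add C f g) = Add C (Comp C h f) (Comp C h g)) \<and>
     (\<forall>A \<in> Obj C. \<forall>B \<in> Obj C. \<forall>D \<in> Obj C.
        \<forall>h \<in> hom C A B. \<forall>f \<in> hom C B D. \<forall>g \<in> hom C B D.
          Comp C (Add C f g) h = Add C (Comp C f h) (Comp C g h))"

definition is_zero_obj :: "('o,'m) addcat \<Rightarrow> 'o \<Rightarrow> bool" where
  "is_zero_obj C Z \<longleftrightarrow> Z \<in> Obj C \<and>
     (\<forall>A \<in> Obj C. (\<exists>!f. f \<in> hom C Z A) \<and> (\<exists>!f. f \<in> hom C A Z))"

definition is_biproduct ::
  "('o,'m) addcat \<Rightarrow> 'o \<Rightarrow> 'o \<Rightarrow> 'o \<Rightarrow> 'm \<Rightarrow> 'm \<Rightarrow> 'm \<Rightarrow> 'm \<Rightarrow> bool" where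
  "is_biproduct C A B S i1 i2 p1 p2 \<longleftrightarrow>
     A \<in> Obj C \<and> B \<in> Obj C \<and> S \<in> Obj C \<and>
     i1 \<in> hom C A S \<and> i2 \<in> hom C B S \<and> p1 \<in> hom C S A \<and> p2 \<in> hom C S B \<and>
     Comp C p1 i1 = Ident C A \<and> Comp C p2 i2 = Ident C B \<and>
     Comp C p2 i1 = Zer C A B \<and> Comp C p1 i2 = Zer C B A \<and>
     Add C (Comp C i1 p1) (Comp C i2 p2) = Ident C S"

definition is_additive :: "('o,'m) addcat \<Rightarrow> bool" where
  "is_additive C \<longleftrightarrow> is_preadditive C \<and> (\<exists>Z. is_zero_obj C Z) \<and>
     (\<forall>A \<in> Obj C. \<forall>B \<in> Obj C. \<exists>S i1 i2 p1 p2. is_biproduct C A B S i1 i2 p1 p2)"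

definition is_iso :: "('o,'m) addcat \<Rightarrow> 'm \<Rightarrow> bool" where
  "is_iso C f \<longleftrightarrow> f \<in> Arr C \<and>
     (\<exists>g \<in> hom C (Cod C f) (Dom C f).
        Comp C g f = Ident C (Dom C f) \<and> Comp C f g = Ident C (Cod C f))"

definition iso_objs :: "('o,'m) addcat \<Rightarrow> 'o \<Rightarrow> 'o \<Rightarrow> bool" where
  "iso_objs C A B \<longleftrightarrow> (\<exists>f \<in> hom C A B. is_iso C f)"

definition indecomposable :: "('o,'m) addcat \<Rightarrow> 'o \<Rightarrow> bool" where
  "indecomposable C X \<longleftrightarrow> X \<in> Obj C \<and> \<not> is_zero_obj C X \<and>
     (\<forall>A B i1 i2 p1 p2. is_biproduct C A B X i1 i2 p1 p2 \<longrightarrow>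
         is_zero_obj C A \<or> is_zero_obj C B)"

definition is_kernel :: "('o,'m) addcat \<Rightarrow> 'm \<Rightarrow> 'm \<Rightarrow> bool" where
  "is_kernel C i d \<longleftrightarrow> i \<in> Arr C \<and> d \<in> Arr C \<and> Cod C i = Dom C d \<and>
     Comp C d i = Zer C (Dom C i) (Cod C d) \<and>
     (\<forall>f \<in> Arr C. Cod C f = Dom C d \<longrightarrow> Comp C d f = Zer C (Dom C f) (Cod C d) \<longrightarrow>
        (\<exists>!h. h \<in> hom C (Dom C f) (Dom C i) \<and> Comp C i h = f))"

definition is_cokernel :: "('o,'m) addcat \<Rightarrow> 'm \<Rightarrow> 'm \<Rightarrow> bool" where
  "is_cokernel C d i \<longleftrightarrow> i \<in> Arr C \<and> d \<in> Arr C \<and> Cod C i = Dom C d \<and>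
     Comp C d i = Zer C (Dom C i) (Cod C d) \<and>
     (\<forall>f \<in> Arr C. Dom C f = Cod C i \<longrightarrow> Comp C f i = Zer C (Dom C i) (Cod C f) \<longrightarrow>
        (\<exists>!h. h \<in> hom C (Cod C d) (Cod C f) \<and> Comp C h d = f))"

definition kernel_cokernel_pair :: "('o,'m) addcat \<Rightarrow> 'm \<Rightarrow> 'm \<Rightarrow> bool" where
  "kernel_cokernel_pair C i d \<longleftrightarrow> is_kernel C i d \<and> is_cokernel C d i"

definition comm_square :: "('o,'m) addcat \<Rightarrow> 'm \<Rightarrow> 'm \<Rightarrow> 'm \<Rightarrow> 'm \<Rightarrow> bool" where
  "comm_square C f g f' g' \<longleftrightarrow> f \<in> Arr C \<and> g \<in> Arr C \<and> f' \<in> Arr C \<and> g' \<in> Arr C \<and>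
     Dom C f = Dom C g \<and> Cod C g = Dom C f' \<and> Cod C f = Dom C g' \<and> Cod C f' = Cod C g' \<and>
     Comp C g' f = Comp C f' g"

definition is_pushout :: "('o,'m) addcat \<Rightarrow> 'm \<Rightarrow> 'm \<Rightarrow> 'm \<Rightarrow> 'm \<Rightarrow> bool" where
  "is_pushout C f g f' g' \<longleftrightarrow> comm_square C f g f' g' \<and>
     (\<forall>u \<in> Arr C. \<forall>v \<in> Arr C. Dom C u = Cod C f \<longrightarrow> Dom C v = Cod C g \<longrightarrow>
        Cod C u = Cod C v \<longrightarrow> Comp C u f = Comp C v g \<longrightarrow>
        (\<exists>!h. h \<in> hom C (Cod C f') (Cod C u) \<and> Comp C h g' = u \<and> Comp C h f' = v))"

definition is_pullback :: "('o,'m) addcat \<Rightarrow> 'm \<Rightarrow> 'm \<Rightarrow> 'm \<Rightarrow> 'm \<Rightarrow> bool" where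
  "is_pullback C f g f' g' \<longleftrightarrow> comm_square C f g f' g' \<and>
     (\<forall>u \<in> Arr C. \<forall>v \<in> Arr C. Cod C u = Dom C g' \<longrightarrow> Cod C v = Dom C f' \<longrightarrow>
        Dom C u = Dom C v \<longrightarrow> Comp C g' u = Comp C f' v \<longrightarrow>
        (\<exists>!h. h \<in> hom C (Dom C u) (Dom C f) \<and> Comp C f h = u \<and> Comp C g h = v))"

definition adm_monic :: "('o,'m) addcat \<Rightarrow> ('m \<times> 'm) set \<Rightarrow> 'm \<Rightarrow> bool" where
  "adm_monic C E i \<longleftrightarrow> (\<exists>d. (i, d) \<in> E)"

definition adm_epic :: "('o,'m) addcat \<Rightarrow> ('m \<times> 'm) set \<Rightarrow> 'm \<Rightarrow> bool" where
  "adm_epic C E d \<longleftrightarrow> (\<exists>i. (i, d) \<in> E)"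

text \<open>Exact structure in the sense of Quillen (axioms as in Buehler, "Exact categories"):
  E is a class of kernel-cokernel pairs closed under isomorphisms of pairs, satisfying
  [E0], [E0op], [E1], [E1op], [E2], [E2op].\<close>
definition exact_category :: "('o,'m) addcat \<Rightarrow> ('m \<times> 'm) set \<Rightarrow> bool" where
  "exact_category C E \<longleftrightarrow> is_additive C \<and>
     (\<forall>(i, d) \<in> E. kernel_cokernel_pair C i d) \<and>
     (\<forall>i d i' d' a b c. (i, d) \<in> E \<longrightarrow> kernel_cokernel_pair C i' d' \<longrightarrow>
        is_iso C a \<longrightarrow> is_iso C b \<longrightarrow> is_iso C c \<longrightarrow>
        a \<in> hom C (Dom C i) (Dom C i') \<longrightarrow> b \<in> hom C (Cod C i) (Cod C i') \<longrightarrow>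
        c \<in> hom C (Cod C d) (Cod C d') \<longrightarrow>
        Comp C b i = Comp C i' a \<longrightarrow> Comp C c d = Comp C d' b \<longrightarrow> (i', d') \<in> E) \<and>
     (\<forall>A \<in> Obj C. adm_monic C E (Ident C A)) \<and>
     (\<forall>A \<in> Obj C. adm_epic C E (Ident C A)) \<and>
     (\<forall>i j. adm_monic C E i \<longrightarrow> adm_monic C E j \<longrightarrow> Cod C i = Dom C j \<longrightarrow>
        adm_monic C E (Comp C j i)) \<and>
     (\<forall>d e. adm_epic C E d \<longrightarrow> adm_epic C E e \<longrightarrow> Cod C d = Dom C e \<longrightarrow>
        adm_epic C E (Comp C e d)) \<and>
     (\<forall>i f. adm_monic C E i \<longrightarrow> f \<in> Arr C \<longrightarrow> Dom C f = Dom C i \<longrightarrow>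
        (\<exists>i' f'. is_pushout C i f i' f' \<and> adm_monic C E i')) \<and>
     (\<forall>d f. adm_epic C E d \<longrightarrow> f \<in> Arr C \<longrightarrow> Cod C f = Cod C d \<longrightarrow>
        (\<exists>d' f'. is_pullback C d' f' d f \<and> adm_epic C E d'))"

definition proper_sub :: "('o,'m) addcat \<Rightarrow> ('m \<times> 'm) set \<Rightarrow> 'o \<Rightarrow> 'o \<Rightarrow> bool" where
  "proper_sub C E X Y \<longleftrightarrow>
     (\<exists>i \<in> hom C X Y. adm_monic C E i \<and> \<not> is_iso C i)"

definition E_simple :: "('o,'m) addcat \<Rightarrow> ('m \<times> 'm) set \<Rightarrow> 'o \<Rightarrow> bool" where
  "E_simple C E S \<longleftrightarrow> S \<in> Obj C \<and> \<not> is_zero_obj C S \<and>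
     (\<forall>X \<in> Obj C. (\<exists>i \<in> hom C X S. adm_monic C E i) \<longrightarrow>
        is_zero_obj C X \<or> iso_objs C X S)"

definition E_length :: "('o,'m) addcat \<Rightarrow> ('m \<times> 'm) set \<Rightarrow> 'o \<Rightarrow> enat" where
  "E_length C E X = Sup {enat n | n. \<exists>Xs :: nat \<Rightarrow> 'o.
      is_zero_obj C (Xs 0) \<and> Xs n = X \<and>
      (\<forall>k < n. proper_sub C E (Xs k) (Xs (Suc k)))}"

definition finite_exact :: "('o,'m) addcat \<Rightarrow> ('m \<times> 'm) set \<Rightarrow> bool" where
  "finite_exact C E \<longleftrightarrow> (\<forall>X \<in> Obj C. E_length C E X < \<infinity>)"

definition seq_le :: "nat list \<Rightarrow> nat list \<Rightarrow> bool" where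
  "seq_le x y \<longleftrightarrow> x = y \<or> strict_prefix x y \<or>
     (\<exists>i. i < length x \<and> i < length y \<and> take i x = take i y \<and> x ! i > y ! i)"

definition seq_max :: "nat list set \<Rightarrow> nat list" where
  "seq_max S = (THE m. m \<in> S \<and> (\<forall>s \<in> S. seq_le s m))"

definition indec_chain :: "('o,'m) addcat \<Rightarrow> ('m \<times> 'm) set \<Rightarrow> 'o list \<Rightarrow> 'o \<Rightarrow> bool" where
  "indec_chain C E xs X \<longleftrightarrow> xs \<noteq> [] \<and> last xs = X \<and>
     (\<forall>x \<in> set xs. indecomposable C x) \<and>
     (\<forall>k. Suc k < length xs \<longrightarrow> proper_sub C E (xs ! k) (xs ! Suc k))"

definition mu_E :: "('o,'m) addcat \<Rightarrow> ('m \<times> 'm) set \<Rightarrow> 'o \<Rightarrow> nat list" where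
  "mu_E C E X = seq_max {map (\<lambda>Y. the_enat (E_length C E Y)) xs | xs. indec_chain C E xs X}"

definition mu_filtration :: "('o,'m) addcat \<Rightarrow> ('m \<times> 'm) set \<Rightarrow> 'o list \<Rightarrow> 'o \<Rightarrow> bool" where
  "mu_filtration C E xs X \<longleftrightarrow> indec_chain C E xs X \<and>
     (\<forall>i < length xs. mu_E C E (xs ! i) = take (Suc i) (mu_E C E X))"

definition GR_predecessor :: "('o,'m) addcat \<Rightarrow> ('m \<times> 'm) set \<Rightarrow> 'o \<Rightarrow> 'o \<Rightarrow> bool" where
  "GR_predecessor C E X Y \<longleftrightarrow> indecomposable C X \<and> indecomposable C Y \<and> proper_sub C E X Y \<and>
     mu_E C E X = seq_max {mu_E C E Y' | Y'. indecomposable C Y' \<and> proper_sub C E Y' Y}"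

definition GR_filtration :: "('o,'m) addcat \<Rightarrow> ('m \<times> 'm) set \<Rightarrow> 'o list \<Rightarrow> 'o \<Rightarrow> bool" where
  "GR_filtration C E xs X \<longleftrightarrow> indec_chain C E xs X \<and> E_simple C E (xs ! 0) \<and>
     (\<forall>i. 1 \<le> i \<longrightarrow> i < length xs \<longrightarrow> GR_predecessor C E (xs ! (i - 1)) (xs ! i))"

end

theory Submission
  imports Defs
begin

text \<open>
  Finiteness makes E-lengths natural numbers that strictly increase along proper admissible
  inclusions of nonzero objects. Hence only finitely many length sequences end in a given
  indecomposable X, and the measure obeys the Gabriel--Roiter recursion:
  \<open>\<mu>(X) = [l(X)]\<close> if X has no indecomposable proper subobject, and otherwise
  \<open>\<mu>(X)\<close> is the maximum of the measures of these subobjects followed by \<open>l(X)\<close>.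
  An indecomposable object is E-simple exactly when it has no indecomposable proper subobject,
  since every nonzero proper subobject contains an indecomposable one: split off biproduct
  summands, whose injections are admissible monics because, up to isomorphism,
  \<open>A \<rightarrow> A \<oplus> B\<close> is the pushout of the admissible monic \<open>0 \<rightarrow> B\<close>
  along \<open>0 \<rightarrow> A\<close>. With the recursion, Gabriel--Roiter filtrations and
  \<open>\<mu>\<close>-filtrations are both characterised by the same property: the measure of each term is
  the sequence of lengths of the chain up to that term.
\<close>

section \<open>The order on sequences\<close>

lemma seq_le_iff_lexord: "seq_le x y \<longleftrightarrow> x = y \<or> (x, y) \<in> lexord {(a, b). b < a}"
proof -
  have "strict_prefix x y \<longleftrightarrow> length x < length y \<and> take (length x) y = x"
    by (metis append_eq_conv_conj append_take_drop_id le_cases linorder_not_less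
        prefix_def prefix_length_less strict_prefix_def)
  then show ?thesis
    unfolding seq_le_def lexord_take_index_conv by auto
qed

lemma seq_le_refl: "seq_le x x"
  by (simp add: seq_le_def)

lemma seq_le_Nil: "seq_le [] y"
  by (cases y) (simp_all add: seq_le_def)

lemma seq_le_trans: "seq_le x y \<Longrightarrow> seq_le y z \<Longrightarrow> seq_le x z"
  unfolding seq_le_iff_lexord using lexord_trans[of x y _ z] by (auto simp: trans_def)

lemma seq_le_antisym: "seq_le x y \<Longrightarrow> seq_le y x \<Longrightarrow> x = y"
proof -
  have "asym {(a :: nat, b). b < a}"
    by (rule asymI) auto
  then show "seq_le x y \<Longrightarrow> seq_le y x \<Longrightarrow> x = y"
    unfolding seq_le_iff_lexord using lexord_asymmetric by blast
qed

lemma seq_le_total: "seq_le x y \<or> seq_le y x"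
  unfolding seq_le_iff_lexord using lexord_linear[of "{(a, b). b < a}" x y] by force

lemma seq_le_append_greater:
  assumes "seq_le x y" and "\<forall>a \<in> set y. a < n"
  shows "seq_le (x @ [n]) (y @ [n])"
  using assms(1) unfolding seq_le_iff_lexord
proof (elim disjE)
  assume "(x, y) \<in> lexord {(a, b). b < a}"
  then consider "\<exists>c w. y = x @ c # w" | "\<exists>u a b v w. x = u @ a # v \<and> y = u @ b # w \<and> b < a"
    by (auto simp: lexord_def)
  then show "x @ [n] = y @ [n] \<or> (x @ [n], y @ [n]) \<in> lexord {(a, b). b < a}"
  proof cases
    case 1
    with assms(2) show ?thesis by (force simp: lexord_def)
  next
    case 2
    then show ?thesis by (force simp: lexord_def)
  qed
qed simp

lemma seq_max_eqI: "m \<in> S \<Longrightarrow> (\<And>s. s \<in> S \<Longrightarrow> seq_le s m) \<Longrightarrow> seq_max S = m"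
  unfolding seq_max_def by (rule the_equality) (auto intro: seq_le_antisym)

lemma seq_max:
  assumes "finite S" and "S \<noteq> {}"
  shows "seq_max S \<in> S" and "\<And>s. s \<in> S \<Longrightarrow> seq_le s (seq_max S)"
proof -
  have "\<exists>m \<in> S. \<forall>s \<in> S. seq_le s m"
    using assms
  proof (induction S rule: finite_ne_induct)
    case (insert x F)
    then obtain m where "m \<in> F" "\<forall>s \<in> F. seq_le s m" by blast
    then show ?case
      using seq_le_total[of x m] seq_le_refl seq_le_trans by blast
  qed (simp add: seq_le_refl)
  then show "seq_max S \<in> S" "\<And>s. s \<in> S \<Longrightarrow> seq_le s (seq_max S)"
    using seq_max_eqI by metis+
qed

lemma finite_strict_sorted_bounded: "finite {xs :: nat list. sorted_wrt (<) xs \<and> set xs \<subseteq> {..n}}"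
proof (rule finite_subset)
  show "{xs :: nat list. sorted_wrt (<) xs \<and> set xs \<subseteq> {..n}} \<subseteq> sorted_list_of_set ` Pow {..n}"
    by (auto simp: image_iff strict_sorted_iff intro!: exI[of _ "set _"]
        sorted_list_of_set.idem_if_sorted_distinct[symmetric])
qed simp

lemma Sup_enat_attained: "S \<noteq> {} \<Longrightarrow> Sup S = enat m \<Longrightarrow> enat m \<in> (S :: enat set)"
  unfolding Sup_enat_def by (metis Max_in enat.distinct(1))

section \<open>Chains of indecomposables\<close>

lemma indecomposable_objs: "indecomposable C X \<Longrightarrow> X \<in> Obj C \<and> \<not> is_zero_obj C X"
  unfolding indecomposable_def by blast

lemma indec_chain_last_indecomposable: "indec_chain C E xs X \<Longrightarrow> indecomposable C X"
  unfolding indec_chain_def by auto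

lemma indec_chain_nth:
  assumes "indec_chain C E xs X" "Suc j < length xs"
  shows "indecomposable C (xs ! j)" "indecomposable C (xs ! Suc j)"
    and "proper_sub C E (xs ! j) (xs ! Suc j)"
  using assms unfolding indec_chain_def by auto

lemma indec_chain_snoc:
  assumes xs: "indec_chain C E xs Y" and YX: "proper_sub C E Y X" and X: "indecomposable C X"
  shows "indec_chain C E (xs @ [X]) X"
proof -
  have "xs ! k = Y" if "Suc k = length xs" for k
    using xs that unfolding indec_chain_def by (metis diff_Suc_1 last_conv_nth)
  then show ?thesis
    using xs YX X unfolding indec_chain_def by (auto simp: nth_append less_Suc_eq)
qed

lemma indec_chain_cases:
  assumes xs: "indec_chain C E xs X"
  obtains "xs = [X]"
    | ys Y where "xs = ys @ [X]" "indec_chain C E ys Y" "proper_sub C E Y X"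
proof (cases "butlast xs = []")
  case True
  then show thesis
    using that(1) xs unfolding indec_chain_def by (metis append_butlast_last_id append_Nil)
next
  case False
  define ys where "ys = butlast xs"
  have ys: "ys \<noteq> []"
    using False ys_def by simp
  have xs_eq: "xs = ys @ [X]"
    using xs unfolding indec_chain_def ys_def by (metis append_butlast_last_id)
  have "indec_chain C E ys (last ys)"
    using xs ys unfolding indec_chain_def ys_def
    by (simp add: nth_butlast) (meson in_set_butlastD)
  moreover obtain k where k: "length ys = Suc k"
    using ys by (cases ys) auto
  then have "proper_sub C E (xs ! k) (xs ! Suc k)"
    using xs xs_eq unfolding indec_chain_def by simp
  then have "proper_sub C E (last ys) X"
    using k xs_eq ys by (simp add: last_conv_nth nth_append)
  ultimately show thesis
    using that(2) xs_eq by blast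
qed

section \<open>Additive and exact categories\<close>

locale category =
  fixes C :: "('o, 'm) addcat"
  assumes is_category: "is_category C"
begin

lemma homD: "f \<in> hom C A B \<Longrightarrow> f \<in> Arr C \<and> Dom C f = A \<and> Cod C f = B"
  by (simp add: hom_def)

lemma arr_objs: "f \<in> Arr C \<Longrightarrow> Dom C f \<in> Obj C \<and> Cod C f \<in> Obj C"
  using is_category unfolding is_category_def by (elim conjE) blast

lemma hom_objs: "f \<in> hom C A B \<Longrightarrow> A \<in> Obj C \<and> B \<in> Obj C"
  using arr_objs homD by blast

lemma id_hom: "A \<in> Obj C \<Longrightarrow> Ident C A \<in> hom C A A"
  using is_category unfolding is_category_def by blast

lemma comp_arr:
  "f \<in> Arr C \<Longrightarrow> g \<in> Arr C \<Longrightarrow> Cod C f = Dom C g \<Longrightarrow>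
    Comp C g f \<in> hom C (Dom C f) (Cod C g)"
  using is_category unfolding is_category_def by blast

lemma comp_hom: "f \<in> hom C A B \<Longrightarrow> g \<in> hom C B D \<Longrightarrow> Comp C g f \<in> hom C A D"
  using comp_arr[of f g] by (simp add: hom_def)

lemma comp_id_arr:
  "f \<in> Arr C \<Longrightarrow> Comp C (Ident C (Cod C f)) f = f \<and> Comp C f (Ident C (Dom C f)) = f"
  using is_category unfolding is_category_def by blast

lemma comp_id_left: "f \<in> hom C A B \<Longrightarrow> Comp C (Ident C B) f = f"
  using comp_id_arr[of f] by (simp add: hom_def)

lemma comp_id_right: "f \<in> hom C A B \<Longrightarrow> Comp C f (Ident C A) = f"
  using comp_id_arr[of f] by (simp add: hom_def)

lemma comp_assoc_arr:
  "f \<in> Arr C \<Longrightarrow> g \<in> Arr C \<Longrightarrow> h \<in> Arr C \<Longrightarrow> Cod C f = Dom C g \<Longrightarrow>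
    Cod C g = Dom C h \<Longrightarrow> Comp C h (Comp C g f) = Comp C (Comp C h g) f"
  using is_category unfolding is_category_def by blast

lemma comp_assoc:
  "f \<in> hom C A B \<Longrightarrow> g \<in> hom C B D \<Longrightarrow> h \<in> hom C D F \<Longrightarrow>
    Comp C h (Comp C g f) = Comp C (Comp C h g) f"
  by (rule comp_assoc_arr) (auto simp: hom_def)

lemma isoI:
  "f \<in> hom C A B \<Longrightarrow> g \<in> hom C B A \<Longrightarrow> Comp C g f = Ident C A \<Longrightarrow>
    Comp C f g = Ident C B \<Longrightarrow> is_iso C f"
  unfolding is_iso_def hom_def by auto

lemma isoE:
  assumes "is_iso C f" and f: "f \<in> hom C A B"
  obtains g where "g \<in> hom C B A" "Comp C g f = Ident C A" "Comp C f g = Ident C B"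
                  "is_iso C g"
proof -
  obtain g where g: "g \<in> hom C B A" "Comp C g f = Ident C A" "Comp C f g = Ident C B"
    using assms unfolding is_iso_def hom_def by auto
  then show thesis
    using that isoI[OF g(1) f g(3) g(2)] by blast
qed

lemma id_iso: "A \<in> Obj C \<Longrightarrow> is_iso C (Ident C A)"
  by (rule isoI[OF id_hom id_hom]) (simp_all add: comp_id_left[OF id_hom])

lemma iso_comp:
  assumes f: "f \<in> hom C A B" "is_iso C f" and g: "g \<in> hom C B D" "is_iso C g"
  shows "is_iso C (Comp C g f)"
proof -
  obtain f' where f': "f' \<in> hom C B A" "Comp C f' f = Ident C A" "Comp C f f' = Ident C B"
    using isoE f by metis
  obtain g' where g': "g' \<in> hom C D B" "Comp C g' g = Ident C B" "Comp C g g' = Ident C D"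
    using isoE g by metis
  have gf: "Comp C g f \<in> hom C A D" and f'g': "Comp C f' g' \<in> hom C D A"
    using comp_hom f g f' g' by blast+
  have "Comp C (Comp C f' g') (Comp C g f) = Comp C f' (Comp C (Comp C g' g) f)"
    using comp_assoc[OF gf g'(1) f'(1)] comp_assoc[OF f(1) g(1) g'(1)] by simp
  also have "\<dots> = Ident C A"
    using f'(2) g'(2) comp_id_left[OF f(1)] by simp
  finally have left: "Comp C (Comp C f' g') (Comp C g f) = Ident C A" .
  have "Comp C (Comp C g f) (Comp C f' g') = Comp C g (Comp C (Comp C f f') g')"
    using comp_assoc[OF f'g' f(1) g(1)] comp_assoc[OF g'(1) f'(1) f(1)] by simp
  also have "\<dots> = Ident C D"
    using f'(3) g'(3) comp_id_left[OF g'(1)] by simp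
  finally have right: "Comp C (Comp C g f) (Comp C f' g') = Ident C D" .
  show ?thesis
    using isoI[OF gf f'g' left right] .
qed

lemma iso_comp_not_iso:
  assumes g: "g \<in> hom C B D" "is_iso C g" and f: "f \<in> hom C A B" "\<not> is_iso C f"
  shows "\<not> is_iso C (Comp C g f)"
proof
  assume gf: "is_iso C (Comp C g f)"
  obtain g' where g': "g' \<in> hom C D B" "Comp C g' g = Ident C B" "is_iso C g'"
    using isoE g by metis
  have "Comp C g' (Comp C g f) = f"
    using comp_assoc[OF f(1) g(1) g'(1)] g'(2) comp_id_left[OF f(1)] by simp
  then have "is_iso C f"
    using iso_comp[OF comp_hom[OF f(1) g(1)] gf g'(1,3)] by simp
  with f(2) show False ..
qed

lemma iso_is_kernel:
  assumes f: "f \<in> hom C Y S" "is_iso C f" and d: "d \<in> hom C S Q"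
    and df: "Comp C d f = Zer C Y Q"
  shows "is_kernel C f d"
  unfolding is_kernel_def
proof (intro conjI ballI impI)
  show "f \<in> Arr C" "d \<in> Arr C" "Cod C f = Dom C d" "Comp C d f = Zer C (Dom C f) (Cod C d)"
    using f d df by (auto simp: hom_def)
  obtain g where g: "g \<in> hom C S Y" "Comp C g f = Ident C Y" "Comp C f g = Ident C S"
    using isoE f by metis
  fix h assume "h \<in> Arr C" "Cod C h = Dom C d"
  then have h: "h \<in> hom C (Dom C h) S"
    using d by (auto simp: hom_def)
  have Dom_f: "Dom C f = Y"
    using f(1) by (simp add: hom_def)
  show "\<exists>!k. k \<in> hom C (Dom C h) (Dom C f) \<and> Comp C f k = h"
  proof (rule ex1I[of _ "Comp C g h"])
    show "Comp C g h \<in> hom C (Dom C h) (Dom C f) \<and> Comp C f (Comp C g h) = h"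
      using comp_hom[OF h g(1)] comp_assoc[OF h g(1) f(1)] g(3) comp_id_left[OF h] Dom_f by simp
    fix k assume "k \<in> hom C (Dom C h) (Dom C f) \<and> Comp C f k = h"
    then show "k = Comp C g h"
      using comp_assoc[of k _ Y f S g Y] f(1) g(1,2) comp_id_left[of k] Dom_f by auto
  qed
qed

lemma pushout_universal:
  assumes po: "is_pushout C i f i' f'"
    and u: "u \<in> hom C (Cod C i) W" and v: "v \<in> hom C (Cod C f) W" and uv: "Comp C u i = Comp C v f"
  shows "\<exists>!h. h \<in> hom C (Cod C i') W \<and> Comp C h f' = u \<and> Comp C h i' = v"
proof -
  have "\<forall>u \<in> Arr C. \<forall>v \<in> Arr C. Dom C u = Cod C i \<longrightarrow> Dom C v = Cod C f \<longrightarrow>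
        Cod C u = Cod C v \<longrightarrow> Comp C u i = Comp C v f \<longrightarrow>
        (\<exists>!h. h \<in> hom C (Cod C i') (Cod C u) \<and> Comp C h f' = u \<and> Comp C h i' = v)"
    using po unfolding is_pushout_def by blast
  then show ?thesis
    using u v uv homD[OF u] homD[OF v] by metis
qed

lemma pushout_endo_eq_id:
  assumes po: "is_pushout C i f i' f'" and x: "x \<in> hom C (Cod C i') (Cod C i')"
    and xf': "Comp C x f' = f'" and xi': "Comp C x i' = i'"
  shows "x = Ident C (Cod C i')"
proof -
  have sq: "i' \<in> hom C (Cod C f) (Cod C i')" "f' \<in> hom C (Cod C i) (Cod C i')"
      "Comp C f' i = Comp C i' f"
    using po unfolding is_pushout_def comm_square_def hom_def by auto
  have "Ident C (Cod C i') \<in> hom C (Cod C i') (Cod C i')"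
    "Comp C (Ident C (Cod C i')) f' = f'" "Comp C (Ident C (Cod C i')) i' = i'"
    using sq id_hom hom_objs comp_id_left by blast+
  then show ?thesis
    using pushout_universal[OF po sq(2,1,3)] x xf' xi' by blast
qed

end

locale preadditive_cat =
  fixes C :: "('o, 'm) addcat"
  assumes preadditive: "is_preadditive C"

sublocale preadditive_cat \<subseteq> category
  using preadditive by unfold_locales (simp add: is_preadditive_def)

context preadditive_cat
begin

lemma hom_group:
  assumes "A \<in> Obj C" "B \<in> Obj C"
  shows "Zer C A B \<in> hom C A B"
    and "f \<in> hom C A B \<Longrightarrow> g \<in> hom C A B \<Longrightarrow> Add C f g \<in> hom C A B"
    and "f \<in> hom C A B \<Longrightarrow> g \<in> hom C A B \<Longrightarrow> Add C f g = Add C g f"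
    and "f \<in> hom C A B \<Longrightarrow> g \<in> hom C A B \<Longrightarrow> h \<in> hom C A B \<Longrightarrow>
           Add C (Add C f g) h = Add C f (Add C g h)"
    and "f \<in> hom C A B \<Longrightarrow> Add C f (Zer C A B) = f"
    and "f \<in> hom C A B \<Longrightarrow> Neg C f \<in> hom C A B"
    and "f \<in> hom C A B \<Longrightarrow> Add C f (Neg C f) = Zer C A B"
  using preadditive assms unfolding is_preadditive_def by blast+

lemma zer_hom: "A \<in> Obj C \<Longrightarrow> B \<in> Obj C \<Longrightarrow> Zer C A B \<in> hom C A B"
  by (rule hom_group)

lemma add_hom: "f \<in> hom C A B \<Longrightarrow> g \<in> hom C A B \<Longrightarrow> Add C f g \<in> hom C A B"
  using hom_group(2) hom_objs by blast

lemma add_zer_left: "f \<in> hom C A B \<Longrightarrow> Add C (Zer C A B) f = f"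
  using hom_group(1,3,5) hom_objs by metis

lemma add_idem_eq_zer:
  assumes f: "f \<in> hom C A B" and idem: "Add C f f = f"
  shows "f = Zer C A B"
proof -
  have A: "A \<in> Obj C" and B: "B \<in> Obj C"
    using hom_objs f by auto
  have "Zer C A B = Add C (Add C f f) (Neg C f)"
    using idem f hom_group(7)[OF A B] by simp
  also have "\<dots> = f"
    using f hom_group(4-7)[OF A B] by simp
  finally show ?thesis by simp
qed

lemma comp_add:
  "f \<in> hom C A B \<Longrightarrow> g \<in> hom C A B \<Longrightarrow> h \<in> hom C B D \<Longrightarrow>
    Comp C h (Add C f g) = Add C (Comp C h f) (Comp C h g)"
  using preadditive hom_objs unfolding is_preadditive_def by blast

lemma add_comp:
  "h \<in> hom C A B \<Longrightarrow> f \<in> hom C B D \<Longrightarrow> g \<in> hom C B D \<Longrightarrow>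
    Comp C (Add C f g) h = Add C (Comp C f h) (Comp C g h)"
  using preadditive hom_objs unfolding is_preadditive_def by blast

lemma zer_comp:
  assumes f: "f \<in> hom C A B" and D: "D \<in> Obj C"
  shows "Comp C (Zer C B D) f = Zer C A D"
proof (rule add_idem_eq_zer)
  have z: "Zer C B D \<in> hom C B D"
    using zer_hom hom_objs f D by blast
  then show "Comp C (Zer C B D) f \<in> hom C A D"
    using comp_hom f by blast
  show "Add C (Comp C (Zer C B D) f) (Comp C (Zer C B D) f) = Comp C (Zer C B D) f"
    using add_comp[OF f z z] add_zer_left[OF z] by simp
qed

lemma comp_zer:
  assumes f: "f \<in> hom C B D" and A: "A \<in> Obj C"
  shows "Comp C f (Zer C A B) = Zer C A D"
proof (rule add_idem_eq_zer)
  have z: "Zer C A B \<in> hom C A B"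
    using zer_hom hom_objs f A by blast
  then show "Comp C f (Zer C A B) \<in> hom C A D"
    using comp_hom f by blast
  show "Add C (Comp C f (Zer C A B)) (Comp C f (Zer C A B)) = Comp C f (Zer C A B)"
    using comp_add[OF z z f] add_zer_left[OF z] by simp
qed

lemma zero_obj_hom_eq_zer: "is_zero_obj C Z \<Longrightarrow> f \<in> hom C Z A \<Longrightarrow> f = Zer C Z A"
  using zer_hom hom_objs unfolding is_zero_obj_def by blast

lemma zero_objI:
  assumes A: "A \<in> Obj C" and id: "Ident C A = Zer C A A"
  shows "is_zero_obj C A"
  unfolding is_zero_obj_def
proof (intro conjI ballI)
  fix B assume B: "B \<in> Obj C"
  have "g = Zer C A B" if "g \<in> hom C A B" for g
    using comp_id_right[OF that] comp_zer[OF that A] id by simp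
  then show "\<exists>!f. f \<in> hom C A B"
    using zer_hom[OF A B] by blast
  have "g = Zer C B A" if "g \<in> hom C B A" for g
    using comp_id_left[OF that] zer_comp[OF that A] id by simp
  then show "\<exists>!f. f \<in> hom C B A"
    using zer_hom[OF B A] by blast
qed (fact A)

lemma zero_obj_hom_not_iso:
  assumes K: "is_zero_obj C K" and i: "i \<in> hom C K A" and A: "\<not> is_zero_obj C A"
  shows "\<not> is_iso C i"
proof
  assume "is_iso C i"
  then obtain g where g: "g \<in> hom C A K" "Comp C i g = Ident C A"
    using isoE i by metis
  have "A \<in> Obj C"
    using hom_objs i by blast
  moreover have "Ident C A = Zer C A A"
    using g zero_obj_hom_eq_zer[OF K i] zer_comp[OF g(1)] \<open>A \<in> Obj C\<close> by simp
  ultimately show False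
    using zero_objI A by blast
qed

lemma biproduct_inj1_not_iso:
  assumes bp: "is_biproduct C A B Z i1 i2 p1 p2" and B: "\<not> is_zero_obj C B"
  shows "\<not> is_iso C i1"
proof
  assume "is_iso C i1"
  note b = bp[unfolded is_biproduct_def]
  obtain h where h: "h \<in> hom C Z A" "Comp C i1 h = Ident C Z"
    using isoE \<open>is_iso C i1\<close> b by metis
  have "p2 = Comp C (Comp C p2 i1) h"
    using comp_id_right[of p2 Z B] comp_assoc[OF h(1), of i1 Z p2 B] h(2) b by simp
  also have "\<dots> = Zer C Z B"
    using zer_comp[OF h(1)] b by simp
  finally have "Ident C B = Zer C B B"
    using zer_comp[of i2 B Z B] b by simp
  then show False
    using zero_objI B b by blast
qed

lemma biproduct_copair_inj:
  assumes bp: "is_biproduct C A B Z i1 i2 p1 p2"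
    and u: "u \<in> hom C A P" and v: "v \<in> hom C B P"
  shows "Comp C (Add C (Comp C u p1) (Comp C v p2)) i1 = u"
    and "Comp C (Add C (Comp C u p1) (Comp C v p2)) i2 = v"
proof -
  have i: "i1 \<in> hom C A Z" "i2 \<in> hom C B Z" and p: "p1 \<in> hom C Z A" "p2 \<in> hom C Z B"
    and pi: "Comp C p1 i1 = Ident C A" "Comp C p2 i2 = Ident C B"
            "Comp C p2 i1 = Zer C A B" "Comp C p1 i2 = Zer C B A"
    using bp unfolding is_biproduct_def by auto
  have up: "Comp C u p1 \<in> hom C Z P" and vp: "Comp C v p2 \<in> hom C Z P"
    using comp_hom p u v by blast+
  have "Comp C (Add C (Comp C u p1) (Comp C v p2)) i1
      = Add C (Comp C u (Comp C p1 i1)) (Comp C v (Comp C p2 i1))"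
    by (simp add: add_comp[OF i(1) up vp] comp_assoc[OF i(1) p(1) u] comp_assoc[OF i(1) p(2) v])
  also have "\<dots> = u"
    using pi comp_id_right[OF u] comp_zer[OF v] add_zer_left[OF u] hom_group(3) u
      zer_hom hom_objs[OF i(1)] hom_objs[OF u] by metis
  finally show "Comp C (Add C (Comp C u p1) (Comp C v p2)) i1 = u" .
  have "Comp C (Add C (Comp C u p1) (Comp C v p2)) i2
      = Add C (Comp C u (Comp C p1 i2)) (Comp C v (Comp C p2 i2))"
    by (simp add: add_comp[OF i(2) up vp] comp_assoc[OF i(2) p(1) u] comp_assoc[OF i(2) p(2) v])
  also have "\<dots> = v"
    using pi comp_id_right[OF v] comp_zer[OF u] add_zer_left[OF v] hom_objs[OF i(2)] by simp
  finally show "Comp C (Add C (Comp C u p1) (Comp C v p2)) i2 = v" .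
qed

lemma cokernel_comp_iso:
  assumes cok: "is_cokernel C d i" and i: "i \<in> hom C A S" and u: "u \<in> hom C Y A" "is_iso C u"
  shows "is_cokernel C d (Comp C i u)"
  unfolding is_cokernel_def
proof (intro conjI ballI impI)
  obtain u' where u': "u' \<in> hom C A Y" "Comp C u u' = Ident C A"
    using isoE u by metis
  have d: "d \<in> hom C S (Cod C d)" and di: "Comp C d i = Zer C A (Cod C d)"
    using cok i unfolding is_cokernel_def hom_def by auto
  have iu: "Comp C i u \<in> hom C Y S"
    using comp_hom i u by blast
  then show "Comp C i u \<in> Arr C" "d \<in> Arr C" "Cod C (Comp C i u) = Dom C d"
    using d by (auto simp: hom_def)
  show "Comp C d (Comp C i u) = Zer C (Dom C (Comp C i u)) (Cod C d)"
    using comp_assoc[OF u(1) i d] di zer_comp[OF u(1)] hom_objs[OF d] iu by (simp add: hom_def)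
  fix f assume "f \<in> Arr C" "Dom C f = Cod C (Comp C i u)"
    and fiu: "Comp C f (Comp C i u) = Zer C (Dom C (Comp C i u)) (Cod C f)"
  then have f: "f \<in> hom C S (Cod C f)"
    using iu by (auto simp: hom_def)
  have "Comp C f i = Comp C f (Comp C i (Comp C u u'))"
    using u'(2) comp_id_right[OF i] by simp
  also have "\<dots> = Comp C (Comp C f (Comp C i u)) u'"
    using comp_assoc[OF u'(1) u(1) i] comp_assoc[OF u'(1) iu f] by simp
  also have "\<dots> = Zer C A (Cod C f)"
    using fiu iu zer_comp[OF u'(1)] hom_objs[OF f] by (simp add: hom_def)
  finally have "Comp C f i = Zer C (Dom C i) (Cod C f)"
    using i by (simp add: hom_def)
  then show "\<exists>!h. h \<in> hom C (Cod C d) (Cod C f) \<and> Comp C h d = f"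
    using cok f i unfolding is_cokernel_def hom_def by auto
qed

lemma pushout_from_zero_obj_biproduct_iso:
  assumes bp: "is_biproduct C A B Z i1 i2 p1 p2" and K: "is_zero_obj C K"
    and j: "j \<in> hom C K B" and po: "is_pushout C j (Zer C K A) i' f'"
  obtains h where "h \<in> hom C (Cod C i') Z" "is_iso C h" "Comp C h i' = i1"
proof -
  have A: "A \<in> Obj C"
    and i: "i1 \<in> hom C A Z" "i2 \<in> hom C B Z" and p: "p1 \<in> hom C Z A" "p2 \<in> hom C Z B"
    and id: "Add C (Comp C i1 p1) (Comp C i2 p2) = Ident C Z"
    using bp unfolding is_biproduct_def by auto
  have z: "Zer C K A \<in> hom C K A"
    using zer_hom A K unfolding is_zero_obj_def by blast
  define P where "P = Cod C i'"
  have i': "i' \<in> hom C A P" and f': "f' \<in> hom C B P"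
    using po z j unfolding is_pushout_def comm_square_def P_def hom_def by auto
  have "Comp C i2 j = Comp C i1 (Zer C K A)"
    using K comp_hom[OF j i(2)] comp_hom[OF z i(1)] zero_obj_hom_eq_zer by metis
  then have "\<exists>!h. h \<in> hom C P Z \<and> Comp C h f' = i2 \<and> Comp C h i' = i1"
    using pushout_universal[OF po, of i2 Z i1] i j z unfolding P_def by (simp add: hom_def)
  then obtain h where h: "h \<in> hom C P Z" "Comp C h f' = i2" "Comp C h i' = i1"
    by blast
  define k where "k = Add C (Comp C i' p1) (Comp C f' p2)"
  have k: "k \<in> hom C Z P"
    unfolding k_def using add_hom comp_hom p i' f' by blast
  have "Comp C h k = Add C (Comp C (Comp C h i') p1) (Comp C (Comp C h f') p2)"
    unfolding k_def using comp_add[OF comp_hom[OF p(1) i'] comp_hom[OF p(2) f'] h(1)]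
      comp_assoc[OF p(1) i' h(1)] comp_assoc[OF p(2) f' h(1)] by simp
  then have "Comp C h k = Ident C Z"
    using h id by simp
  moreover have "Comp C k h = Ident C P"
    using pushout_endo_eq_id[OF po] comp_hom[OF h(1) k]
      comp_assoc[OF f' h(1) k] comp_assoc[OF i' h(1) k] h biproduct_copair_inj[OF bp i' f']
    unfolding P_def k_def by simp
  ultimately show thesis
    using that isoI[OF h(1) k] h unfolding P_def by blast
qed

end

locale exact_cat =
  fixes C :: "('o, 'm) addcat" and E :: "('m \<times> 'm) set"
  assumes exact: "exact_category C E"

sublocale exact_cat \<subseteq> preadditive_cat
  using exact by unfold_locales (simp add: exact_category_def is_additive_def)

context exact_cat
begin

lemma kernel_cokernel_pair_E: "(i, d) \<in> E \<Longrightarrow> kernel_cokernel_pair C i d"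
  using exact unfolding exact_category_def by blast

lemma E_iso_closed:
  assumes "(i, d) \<in> E" "kernel_cokernel_pair C i' d'"
    "is_iso C a" "is_iso C b" "is_iso C c"
    "a \<in> hom C (Dom C i) (Dom C i')" "b \<in> hom C (Cod C i) (Cod C i')"
    "c \<in> hom C (Cod C d) (Cod C d')"
    "Comp C b i = Comp C i' a" "Comp C c d = Comp C d' b"
  shows "(i', d') \<in> E"
proof -
  have "\<forall>i d i' d' a b c. (i, d) \<in> E \<longrightarrow> kernel_cokernel_pair C i' d' \<longrightarrow>
        is_iso C a \<longrightarrow> is_iso C b \<longrightarrow> is_iso C c \<longrightarrow>
        a \<in> hom C (Dom C i) (Dom C i') \<longrightarrow> b \<in> hom C (Cod C i) (Cod C i') \<longrightarrow>
        c \<in> hom C (Cod C d) (Cod C d') \<longrightarrow>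
        Comp C b i = Comp C i' a \<longrightarrow> Comp C c d = Comp C d' b \<longrightarrow> (i', d') \<in> E"
    using exact unfolding exact_category_def by (elim conjE)
  then show ?thesis
    using assms by blast
qed

lemma adm_monic_id: "A \<in> Obj C \<Longrightarrow> adm_monic C E (Ident C A)"
  using exact unfolding exact_category_def by blast

lemma adm_epic_id: "A \<in> Obj C \<Longrightarrow> adm_epic C E (Ident C A)"
  using exact unfolding exact_category_def by blast

lemma adm_monic_comp:
  "adm_monic C E i \<Longrightarrow> adm_monic C E j \<Longrightarrow> Cod C i = Dom C j \<Longrightarrow> adm_monic C E (Comp C j i)"
  using exact unfolding exact_category_def by blast

lemma adm_monic_pushout:
  "adm_monic C E i \<Longrightarrow> f \<in> Arr C \<Longrightarrow> Dom C f = Dom C i \<Longrightarrow>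
    \<exists>i' f'. is_pushout C i f i' f' \<and> adm_monic C E i'"
  using exact unfolding exact_category_def by blast

lemma iso_adm_monic:
  assumes f: "f \<in> hom C Y S" "is_iso C f"
  shows "adm_monic C E f"
proof -
  obtain g where g: "g \<in> hom C S Y" "Comp C g f = Ident C Y" "Comp C f g = Ident C S" "is_iso C g"
    using isoE f by metis
  have S: "S \<in> Obj C"
    using hom_objs f by blast
  then obtain d where dE: "(Ident C S, d) \<in> E"
    using adm_monic_id unfolding adm_monic_def by blast
  then have ker: "is_kernel C (Ident C S) d" and cok: "is_cokernel C d (Ident C S)"
    using kernel_cokernel_pair_E unfolding kernel_cokernel_pair_def by auto
  define Q where "Q = Cod C d"
  have d: "d \<in> hom C S Q"
    using ker id_hom[OF S] unfolding is_kernel_def Q_def hom_def by auto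
  have Q: "Q \<in> Obj C"
    using hom_objs d by blast
  have "d = Zer C S Q"
    using ker id_hom[OF S] comp_id_right[OF d] unfolding is_kernel_def Q_def hom_def by auto
  then have "Comp C d f = Zer C Y Q"
    using zer_comp[OF f(1) Q] by simp
  then have "is_kernel C f d"
    using iso_is_kernel f d by blast
  moreover have "is_cokernel C d f"
    using cokernel_comp_iso[OF cok id_hom[OF S] f] comp_id_left[OF f(1)] by simp
  ultimately have "kernel_cokernel_pair C f d"
    unfolding kernel_cokernel_pair_def ..
  then have "(f, d) \<in> E"
  proof (rule E_iso_closed[OF dE _ g(4) id_iso[OF S] id_iso[OF Q]])
    show "g \<in> hom C (Dom C (Ident C S)) (Dom C f)"
      and "Ident C S \<in> hom C (Cod C (Ident C S)) (Cod C f)"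
      and "Ident C Q \<in> hom C (Cod C d) (Cod C d)"
      using g(1) f(1) id_hom[OF S] id_hom[OF Q] Q_def by (simp_all add: hom_def)
    show "Comp C (Ident C S) (Ident C S) = Comp C f g"
      using g(3) comp_id_left[OF id_hom[OF S]] by simp
    show "Comp C (Ident C Q) d = Comp C d (Ident C S)"
      using comp_id_left[OF d] comp_id_right[OF d] by simp
  qed
  then show ?thesis
    unfolding adm_monic_def by blast
qed

lemma adm_monic_from_zero_obj:
  assumes A: "A \<in> Obj C"
  obtains K i where "is_zero_obj C K" "i \<in> hom C K A" "adm_monic C E i"
proof -
  obtain i where iE: "(i, Ident C A) \<in> E"
    using adm_epic_id[OF A] unfolding adm_epic_def by blast
  then have ker: "is_kernel C i (Ident C A)"
    using kernel_cokernel_pair_E unfolding kernel_cokernel_pair_def by blast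
  define K where "K = Dom C i"
  have i: "i \<in> hom C K A"
    using ker id_hom[OF A] unfolding is_kernel_def K_def hom_def by auto
  have K: "K \<in> Obj C"
    using hom_objs i by blast
  have "i = Zer C K A"
    using ker id_hom[OF A] comp_id_left[OF i] unfolding is_kernel_def K_def hom_def by auto
  then have "Comp C i (Zer C K K) = i" and "Comp C i (Ident C K) = i"
    using comp_zer[OF i K] comp_id_right[OF i] by simp_all
  moreover have "\<exists>!h. h \<in> hom C K K \<and> Comp C i h = i"
    using ker \<open>i = Zer C K A\<close> i unfolding is_kernel_def K_def hom_def by auto
  ultimately have "Ident C K = Zer C K K"
    using id_hom[OF K] zer_hom[OF K K] by blast
  then have "is_zero_obj C K"
    using zero_objI K by blast
  then show thesis
    using that i iE unfolding adm_monic_def by blast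
qed

lemma proper_sub_objs: "proper_sub C E A B \<Longrightarrow> A \<in> Obj C \<and> B \<in> Obj C"
  unfolding proper_sub_def using hom_objs by blast

lemma proper_sub_comp_iso:
  assumes AB: "proper_sub C E A B" and f: "f \<in> hom C B B'" "is_iso C f"
  shows "proper_sub C E A B'"
proof -
  obtain j where j: "j \<in> hom C A B" "adm_monic C E j" "\<not> is_iso C j"
    using AB unfolding proper_sub_def by blast
  have "adm_monic C E (Comp C f j)"
    using adm_monic_comp[OF j(2) iso_adm_monic[OF f]] j(1) f(1) by (simp add: hom_def)
  then show ?thesis
    unfolding proper_sub_def using comp_hom[OF j(1) f(1)] iso_comp_not_iso[OF f j(1,3)] by blast
qed

lemma biproduct_inj1_adm_monic:
  assumes bp: "is_biproduct C A B Z i1 i2 p1 p2"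
  shows "adm_monic C E i1"
proof -
  have A: "A \<in> Obj C" and B: "B \<in> Obj C"
    using bp unfolding is_biproduct_def by auto
  obtain K j where K: "is_zero_obj C K" and j: "j \<in> hom C K B" "adm_monic C E j"
    using adm_monic_from_zero_obj[OF B] by blast
  have "Zer C K A \<in> hom C K A"
    using zer_hom A K unfolding is_zero_obj_def by blast
  then have "\<exists>i' f'. is_pushout C j (Zer C K A) i' f' \<and> adm_monic C E i'"
    using adm_monic_pushout[OF j(2), of "Zer C K A"] j(1) by (simp add: hom_def)
  then obtain i' f' where po: "is_pushout C j (Zer C K A) i' f'" and i': "adm_monic C E i'"
    by blast
  obtain h where h: "h \<in> hom C (Cod C i') Z" "is_iso C h" "Comp C h i' = i1"
    using pushout_from_zero_obj_biproduct_iso[OF bp K j(1) po] .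
  show ?thesis
    using adm_monic_comp[OF i' iso_adm_monic[OF h(1,2)]] h by (simp add: hom_def)
qed

lemma proper_sub_biproduct_inj1:
  assumes bp: "is_biproduct C A B Z i1 i2 p1 p2" and B: "\<not> is_zero_obj C B"
  shows "proper_sub C E A Z"
  using bp biproduct_inj1_adm_monic[OF bp] biproduct_inj1_not_iso[OF bp B]
  unfolding proper_sub_def is_biproduct_def by blast

section \<open>Length\<close>

definition proper_chain :: "nat \<Rightarrow> (nat \<Rightarrow> 'o) \<Rightarrow> 'o \<Rightarrow> bool" where
  "proper_chain n Xs X \<longleftrightarrow> is_zero_obj C (Xs 0) \<and> Xs n = X \<and>
     (\<forall>k < n. proper_sub C E (Xs k) (Xs (Suc k)))"

lemma E_length_proper_chain: "E_length C E X = Sup {enat n | n. \<exists>Xs. proper_chain n Xs X}"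
  unfolding E_length_def proper_chain_def ..

lemma proper_chain_extend:
  "proper_chain n Xs Y \<Longrightarrow> proper_sub C E Y X \<Longrightarrow> proper_chain (Suc n) (Xs(Suc n := X)) X"
  unfolding proper_chain_def by (auto simp: less_Suc_eq)

lemma proper_chain_one:
  assumes X: "X \<in> Obj C" "\<not> is_zero_obj C X"
  obtains Xs where "proper_chain 1 Xs X"
proof -
  obtain K i where "is_zero_obj C K" "i \<in> hom C K X" "adm_monic C E i"
    using adm_monic_from_zero_obj X by blast
  then have "proper_chain 1 (\<lambda>k. if k = 0 then K else X) X"
    using zero_obj_hom_not_iso X unfolding proper_chain_def proper_sub_def by auto
  then show thesis
    using that by blast
qed

end

locale finite_exact_cat = exact_cat C E
  for C :: "('o, 'm) addcat" and E :: "('m \<times> 'm) set" +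
  assumes finite_exact: "finite_exact C E"
begin

definition len :: "'o \<Rightarrow> nat" where
  "len X = the_enat (E_length C E X)"

lemma E_length_eq_len: "X \<in> Obj C \<Longrightarrow> E_length C E X = enat (len X)"
  using finite_exact unfolding finite_exact_def len_def by auto

lemma proper_chain_le_len:
  assumes "proper_chain n Xs X" and "X \<in> Obj C"
  shows "n \<le> len X"
proof -
  have "enat n \<le> E_length C E X"
    unfolding E_length_proper_chain by (rule Sup_upper) (use assms(1) in blast)
  then show ?thesis
    using E_length_eq_len[OF assms(2)] by simp
qed

lemma proper_chain_len:
  assumes X: "X \<in> Obj C" "\<not> is_zero_obj C X"
  obtains Xs where "proper_chain (len X) Xs X"
proof -
  define S where "S = {enat n | n. \<exists>Xs. proper_chain n Xs X}"
  obtain Xs where "proper_chain 1 Xs X"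
    using proper_chain_one[OF X] .
  then have S: "S \<noteq> {}"
    unfolding S_def by blast
  have Sup: "Sup S = enat (len X)"
    using E_length_eq_len[OF X(1)] unfolding E_length_proper_chain S_def by simp
  have "enat (len X) \<in> S"
    using Sup_enat_attained[OF S Sup] .
  then show thesis
    using that unfolding S_def by blast
qed

lemma len_less:
  assumes YX: "proper_sub C E Y X" and Y: "\<not> is_zero_obj C Y"
  shows "len Y < len X"
proof -
  obtain Xs where "proper_chain (len Y) Xs Y"
    using proper_chain_len proper_sub_objs[OF YX] Y by blast
  then have "proper_chain (Suc (len Y)) (Xs(Suc (len Y) := X)) X"
    using proper_chain_extend YX by blast
  then show ?thesis
    using proper_chain_le_len proper_sub_objs[OF YX] by fastforce
qed

lemma proper_sub_not_iso_objs:
  assumes YX: "proper_sub C E Y X" and Y: "\<not> is_zero_obj C Y"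
  shows "\<not> iso_objs C Y X"
proof
  assume "iso_objs C Y X"
  then obtain f where "f \<in> hom C Y X" "is_iso C f"
    unfolding iso_objs_def by blast
  then obtain g where "g \<in> hom C X Y" "is_iso C g"
    using isoE by metis
  then have "len Y < len Y"
    using len_less[OF proper_sub_comp_iso[OF YX] Y] by blast
  then show False
    by simp
qed

lemma proper_sub_trans:
  assumes AZ: "proper_sub C E A Z" and ZS: "proper_sub C E Z S"
    and A: "\<not> is_zero_obj C A" and Z: "\<not> is_zero_obj C Z"
  shows "proper_sub C E A S"
proof -
  obtain i where i: "i \<in> hom C A Z" "adm_monic C E i"
    using AZ unfolding proper_sub_def by blast
  obtain j where j: "j \<in> hom C Z S" "adm_monic C E j"
    using ZS unfolding proper_sub_def by blast
  have ji: "Comp C j i \<in> hom C A S" "adm_monic C E (Comp C j i)"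
    using comp_hom[OF i(1) j(1)] adm_monic_comp[OF i(2) j(2)] i(1) j(1) by (auto simp: hom_def)
  have "\<not> is_iso C (Comp C j i)"
  proof
    assume "is_iso C (Comp C j i)"
    then obtain g where "g \<in> hom C S A" "is_iso C g"
      using isoE ji(1) by metis
    then have "len Z < len A"
      using len_less[OF proper_sub_comp_iso[OF ZS] Z] by blast
    with len_less[OF AZ A] show False
      by simp
  qed
  then show ?thesis
    using ji unfolding proper_sub_def by blast
qed

lemma proper_sub_indecomposable:
  "proper_sub C E Z S \<Longrightarrow> \<not> is_zero_obj C Z \<Longrightarrow> \<exists>W. indecomposable C W \<and> proper_sub C E W S"
proof (induction "len Z" arbitrary: Z rule: less_induct)
  case less
  show ?case
  proof (cases "indecomposable C Z")
    case False
    then obtain A B i1 i2 p1 p2 where bp: "is_biproduct C A B Z i1 i2 p1 p2"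
      and A: "\<not> is_zero_obj C A" and B: "\<not> is_zero_obj C B"
      using less.prems proper_sub_objs unfolding indecomposable_def by blast
    have AZ: "proper_sub C E A Z"
      using proper_sub_biproduct_inj1[OF bp B] .
    show ?thesis
      using less.hyps[OF len_less[OF AZ A] proper_sub_trans[OF AZ less.prems(1) A less.prems(2)] A] .
  qed (use less.prems in blast)
qed

section \<open>The Gabriel--Roiter measure\<close>

lemma indec_chain_lengths:
  "indec_chain C E xs X \<Longrightarrow> sorted_wrt (<) (map len xs) \<and> (\<forall>Y \<in> set xs. len Y \<le> len X)"
proof (induction xs arbitrary: X rule: rev_induct)
  case (snoc x xs)
  from snoc.prems show ?case
  proof (cases rule: indec_chain_cases)
    case (2 ys Y)
    then have ys: "ys = xs" "x = X"
      by simp_all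
    have "len Y < len X"
      using len_less[OF 2(3)] indecomposable_objs[OF indec_chain_last_indecomposable[OF 2(2)]]
      by blast
    moreover have "sorted_wrt (<) (map len xs)" "\<forall>Z \<in> set xs. len Z \<le> len Y"
      using snoc.IH 2(2) ys by blast+
    ultimately show ?thesis
      using ys by (fastforce simp: sorted_wrt_append)
  qed simp
qed (simp add: indec_chain_def)

definition chain_lengths :: "'o \<Rightarrow> nat list set" where
  "chain_lengths X = {map len xs | xs. indec_chain C E xs X}"

definition sub_measures :: "'o \<Rightarrow> nat list set" where
  "sub_measures X = {mu_E C E Y | Y. indecomposable C Y \<and> proper_sub C E Y X}"

lemma mu_E_eq_seq_max: "mu_E C E X = seq_max (chain_lengths X)"
  unfolding mu_E_def chain_lengths_def len_def[abs_def] ..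

lemma chain_lengths_bounded:
  assumes "s \<in> chain_lengths X"
  shows "sorted_wrt (<) s \<and> s \<noteq> [] \<and> last s = len X \<and> set s \<subseteq> {..len X}"
proof -
  obtain xs where xs: "indec_chain C E xs X" "s = map len xs"
    using assms unfolding chain_lengths_def by blast
  then have "xs \<noteq> []" "last xs = X"
    unfolding indec_chain_def by simp_all
  then show ?thesis
    using indec_chain_lengths[OF xs(1)] xs(2) by (auto simp: last_map)
qed

lemma finite_chain_lengths: "finite (chain_lengths X)"
  by (rule finite_subset[OF _ finite_strict_sorted_bounded[of "len X"]])
    (auto dest!: chain_lengths_bounded)

lemma singleton_in_chain_lengths: "indecomposable C X \<Longrightarrow> [len X] \<in> chain_lengths X"
  unfolding chain_lengths_def by (intro CollectI exI[of _ "[X]"]) (simp add: indec_chain_def)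

lemma chain_lengths_nonempty: "indecomposable C X \<Longrightarrow> chain_lengths X \<noteq> {}"
  using singleton_in_chain_lengths by blast

lemma mu_E_in_chain_lengths: "indecomposable C X \<Longrightarrow> mu_E C E X \<in> chain_lengths X"
  unfolding mu_E_eq_seq_max by (rule seq_max(1)[OF finite_chain_lengths chain_lengths_nonempty])

lemma mu_E_greatest:
  "indecomposable C X \<Longrightarrow> s \<in> chain_lengths X \<Longrightarrow> seq_le s (mu_E C E X)"
  unfolding mu_E_eq_seq_max by (rule seq_max(2)[OF finite_chain_lengths chain_lengths_nonempty])

lemma sub_measures_bounded:
  "s \<in> sub_measures X \<Longrightarrow> sorted_wrt (<) s \<and> s \<noteq> [] \<and> set s \<subseteq> {..<len X}"
proof -
  assume "s \<in> sub_measures X"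
  then obtain Y where Y: "indecomposable C Y" "proper_sub C E Y X" "s = mu_E C E Y"
    unfolding sub_measures_def by blast
  have "len Y < len X"
    using len_less[OF Y(2)] indecomposable_objs[OF Y(1)] by simp
  then show ?thesis
    using chain_lengths_bounded[OF mu_E_in_chain_lengths[OF Y(1)]] Y(3) by auto
qed

lemma finite_sub_measures: "finite (sub_measures X)"
  by (rule finite_subset[OF _ finite_strict_sorted_bounded[of "len X"]])
    (auto dest!: sub_measures_bounded)

lemma chain_lengths_cases:
  assumes "s \<in> chain_lengths X"
  obtains "s = [len X]"
    | Y t where "indecomposable C Y" "proper_sub C E Y X" "t \<in> chain_lengths Y" "s = t @ [len X]"
proof -
  obtain xs where xs: "indec_chain C E xs X" "s = map len xs"
    using assms unfolding chain_lengths_def by blast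
  from xs(1) show thesis
  proof (cases rule: indec_chain_cases)
    case 1
    then show thesis
      using that(1) xs(2) by simp
  next
    case (2 ys Y)
    then show thesis
      using that(2)[of Y "map len ys"] xs(2) indec_chain_last_indecomposable[OF 2(2)]
      unfolding chain_lengths_def by auto
  qed
qed

lemma mu_E_eq_singleton:
  assumes X: "indecomposable C X" and no_sub: "sub_measures X = {}"
  shows "mu_E C E X = [len X]"
proof -
  have "s = [len X]" if "s \<in> chain_lengths X" for s
    using that
  proof (cases rule: chain_lengths_cases)
    case (2 Y t)
    then have "mu_E C E Y \<in> sub_measures X"
      unfolding sub_measures_def by blast
    with no_sub show ?thesis
      by simp
  qed
  then show ?thesis
    unfolding mu_E_eq_seq_max using singleton_in_chain_lengths[OF X]
    by (metis seq_max_eqI seq_le_refl)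
qed

lemma mu_E_eq_snoc:
  assumes X: "indecomposable C X" and sub: "sub_measures X \<noteq> {}"
  shows "mu_E C E X = seq_max (sub_measures X) @ [len X]"
proof -
  define M where "M = seq_max (sub_measures X)"
  have M: "M \<in> sub_measures X" "\<And>s. s \<in> sub_measures X \<Longrightarrow> seq_le s M"
    using seq_max[OF finite_sub_measures sub] unfolding M_def by auto
  have M_less: "\<forall>a \<in> set M. a < len X"
    using sub_measures_bounded[OF M(1)] by auto
  obtain Y where Y: "indecomposable C Y" "proper_sub C E Y X" "M = mu_E C E Y"
    using M(1) unfolding sub_measures_def by blast
  then obtain ys where ys: "indec_chain C E ys Y" "M = map len ys"
    using mu_E_in_chain_lengths[OF Y(1)] unfolding chain_lengths_def by auto
  have "M @ [len X] = map len (ys @ [X])"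
    using ys(2) by simp
  then have "M @ [len X] \<in> chain_lengths X"
    using indec_chain_snoc[OF ys(1) Y(2) X] unfolding chain_lengths_def by blast
  moreover have "seq_le s (M @ [len X])" if "s \<in> chain_lengths X" for s
    using that
  proof (cases rule: chain_lengths_cases)
    case 1
    then show ?thesis
      using seq_le_append_greater[OF seq_le_Nil M_less] by simp
  next
    case (2 Z t)
    then have "seq_le t M"
      using mu_E_greatest M(2) seq_le_trans unfolding sub_measures_def by blast
    then show ?thesis
      using seq_le_append_greater[OF _ M_less] 2(4) by simp
  qed
  ultimately show ?thesis
    unfolding mu_E_eq_seq_max M_def by (rule seq_max_eqI)
qed

lemma E_simple_iff_no_sub_measures:
  assumes S: "indecomposable C S"
  shows "E_simple C E S \<longleftrightarrow> sub_measures S = {}"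
proof
  assume simple: "E_simple C E S"
  show "sub_measures S = {}"
  proof (rule ccontr)
    assume "sub_measures S \<noteq> {}"
    then obtain Y where Y: "indecomposable C Y" "proper_sub C E Y S"
      unfolding sub_measures_def by blast
    then have "iso_objs C Y S"
      using simple indecomposable_objs[OF Y(1)] proper_sub_objs[OF Y(2)]
      unfolding E_simple_def proper_sub_def by blast
    then show False
      using proper_sub_not_iso_objs[OF Y(2)] indecomposable_objs[OF Y(1)] by blast
  qed
next
  assume no_sub: "sub_measures S = {}"
  have "is_zero_obj C Z \<or> iso_objs C Z S" if i: "i \<in> hom C Z S" "adm_monic C E i" for Z i
  proof (rule ccontr)
    assume "\<not> (is_zero_obj C Z \<or> iso_objs C Z S)"
    then have "proper_sub C E Z S" and "\<not> is_zero_obj C Z"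
      using i unfolding proper_sub_def iso_objs_def by auto
    then obtain W where "indecomposable C W" "proper_sub C E W S"
      using proper_sub_indecomposable by blast
    then have "mu_E C E W \<in> sub_measures S"
      unfolding sub_measures_def by blast
    with no_sub show False
      by simp
  qed
  then show "E_simple C E S"
    using indecomposable_objs[OF S] unfolding E_simple_def by blast
qed

section \<open>Filtrations\<close>

definition realizes_mu :: "'o list \<Rightarrow> bool" where
  "realizes_mu xs \<longleftrightarrow> (\<forall>i < length xs. mu_E C E (xs ! i) = map len (take (Suc i) xs))"

lemma GR_filtration_imp_realizes_mu:
  assumes GR: "GR_filtration C E xs X"
  shows "realizes_mu xs"
  unfolding realizes_mu_def
proof (intro allI impI)
  have xs: "indec_chain C E xs X"
    using GR unfolding GR_filtration_def by blast
  fix i assume "i < length xs"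
  then show "mu_E C E (xs ! i) = map len (take (Suc i) xs)"
  proof (induction i)
    case 0
    have "indecomposable C (xs ! 0)" and "E_simple C E (xs ! 0)"
      using 0 xs GR unfolding indec_chain_def GR_filtration_def by auto
    then have "mu_E C E (xs ! 0) = [len (xs ! 0)]"
      using mu_E_eq_singleton E_simple_iff_no_sub_measures by blast
    then show ?case
      using 0 by (cases xs) auto
  next
    case (Suc j)
    have "GR_predecessor C E (xs ! j) (xs ! Suc j)"
      using GR Suc.prems unfolding GR_filtration_def by (metis diff_Suc_1 le_add1 plus_1_eq_Suc)
    then have pred: "mu_E C E (xs ! j) = seq_max (sub_measures (xs ! Suc j))"
      and mem: "mu_E C E (xs ! j) \<in> sub_measures (xs ! Suc j)"
      unfolding GR_predecessor_def sub_measures_def by blast+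
    have "mu_E C E (xs ! Suc j) = mu_E C E (xs ! j) @ [len (xs ! Suc j)]"
      using mu_E_eq_snoc[OF indec_chain_nth(2)[OF xs Suc.prems]] mem pred by auto
    then show ?case
      using Suc by (simp add: take_Suc_conv_app_nth)
  qed
qed

lemma realizes_mu_imp_GR_filtration:
  assumes xs: "indec_chain C E xs X" and real: "realizes_mu xs"
  shows "GR_filtration C E xs X"
  unfolding GR_filtration_def
proof (intro conjI allI impI)
  have mu: "\<And>i. i < length xs \<Longrightarrow> mu_E C E (xs ! i) = map len (take (Suc i) xs)"
    using real unfolding realizes_mu_def by blast
  have nonempty: "xs \<noteq> []"
    using xs unfolding indec_chain_def by blast
  have x0: "indecomposable C (xs ! 0)"
    using xs nonempty unfolding indec_chain_def by simp
  have "sub_measures (xs ! 0) = {}"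
  proof (rule ccontr)
    assume sub: "sub_measures (xs ! 0) \<noteq> {}"
    have "seq_max (sub_measures (xs ! 0)) \<noteq> []"
      using sub_measures_bounded seq_max(1)[OF finite_sub_measures sub] by blast
    then show False
      using mu_E_eq_snoc[OF x0 sub] mu[of 0] nonempty by (cases xs) auto
  qed
  then show "E_simple C E (xs ! 0)"
    using E_simple_iff_no_sub_measures[OF x0] by blast
  fix i assume "1 \<le> i" "i < length xs"
  then obtain j where j: "i = Suc j" "Suc j < length xs"
    by (cases i) auto
  note chain = indec_chain_nth[OF xs j(2)]
  have mem: "mu_E C E (xs ! j) \<in> sub_measures (xs ! Suc j)"
    using chain unfolding sub_measures_def by blast
  have "mu_E C E (xs ! Suc j) = seq_max (sub_measures (xs ! Suc j)) @ [len (xs ! Suc j)]"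
    using mu_E_eq_snoc[OF chain(2)] mem by blast
  moreover have "mu_E C E (xs ! Suc j) = mu_E C E (xs ! j) @ [len (xs ! Suc j)]"
    using mu[of j] mu[of "Suc j"] j(2) by (simp add: take_Suc_conv_app_nth)
  ultimately show "GR_predecessor C E (xs ! (i - 1)) (xs ! i)"
    using chain j(1) unfolding GR_predecessor_def sub_measures_def by simp
qed (use xs in blast)

lemma realizes_mu_imp_mu_filtration:
  assumes xs: "indec_chain C E xs X" and real: "realizes_mu xs"
  shows "mu_filtration C E xs X"
proof -
  have "xs \<noteq> []" "last xs = X"
    using xs unfolding indec_chain_def by auto
  then have "X = xs ! (length xs - 1)" "length xs - 1 < length xs"
    by (simp_all add: last_conv_nth)
  then have "mu_E C E X = map len xs"
    using real \<open>xs \<noteq> []\<close> unfolding realizes_mu_def by auto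
  then show ?thesis
    using xs real unfolding mu_filtration_def realizes_mu_def by (simp add: take_map)
qed

lemma mu_filtration_imp_realizes_mu:
  assumes mf: "mu_filtration C E xs X"
  shows "realizes_mu xs"
proof -
  define m where "m = mu_E C E X"
  define n where "n = length xs"
  have xs: "indec_chain C E xs X" and mu: "\<And>i. i < n \<Longrightarrow> mu_E C E (xs ! i) = take (Suc i) m"
    using mf unfolding mu_filtration_def m_def n_def by auto
  have last_mu: "last (take (Suc i) m) = len (xs ! i)" if "i < n" for i
  proof -
    have "indecomposable C (xs ! i)"
      using xs that unfolding indec_chain_def n_def by simp
    then show ?thesis
      using chain_lengths_bounded[OF mu_E_in_chain_lengths] mu[OF that] by metis
  qed
  have "n \<noteq> 0" "m \<noteq> []"
    using xs chain_lengths_bounded[OF mu_E_in_chain_lengths[OF indec_chain_last_indecomposable[OF xs]]]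
    unfolding indec_chain_def n_def m_def by auto
  have "n \<le> length m"
  proof (rule ccontr)
    assume "\<not> n \<le> length m"
    then have "len (xs ! (length m - 1)) = len (xs ! (n - 1))"
      using last_mu[of "length m - 1"] last_mu[of "n - 1"] \<open>m \<noteq> []\<close> by simp
    moreover have "length m - 1 < n - 1" "n - 1 < length (map len xs)"
      using \<open>\<not> n \<le> length m\<close> \<open>m \<noteq> []\<close> \<open>n \<noteq> 0\<close> unfolding n_def
      by (simp_all add: Suc_le_eq less_diff_conv)
    then have "len (xs ! (length m - 1)) < len (xs ! (n - 1))"
      using sorted_wrt_nth_less[OF conjunct1[OF indec_chain_lengths[OF xs]]] unfolding n_def
      by fastforce
    ultimately show False
      by simp
  qed
  then have "take n m = map len xs"
    using last_mu by (intro nth_equalityI) (auto simp: n_def last_conv_nth take_Suc_conv_app_nth)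
  then show ?thesis
    unfolding realizes_mu_def using mu n_def
    by (metis take_map take_take min.absorb1 Suc_leI)
qed

end

theorem proposition7p11:
  fixes C :: "('o, 'm) addcat" and E :: "('m \<times> 'm) set"
    and X :: 'o and xs :: "'o list"
  assumes "exact_category C E"
    and "finite_exact C E"
    and "indecomposable C X"
    and "indec_chain C E xs X"
  shows "GR_filtration C E xs X \<longleftrightarrow> mu_filtration C E xs X"
proof -
  \<comment> \<open>The indecomposability of X is part of \<open>indec_chain C E xs X\<close>.\<close>
  interpret finite_exact_cat C E
    using assms(1,2) by unfold_locales
  have "GR_filtration C E xs X \<longleftrightarrow> realizes_mu xs"
    using GR_filtration_imp_realizes_mu realizes_mu_imp_GR_filtration[OF assms(4)] by blast
  also have "\<dots> \<longleftrightarrow> mu_filtration C E xs X"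
    using mu_filtration_imp_realizes_mu realizes_mu_imp_mu_filtration[OF assms(4)] by blast
  finally show ?thesis .
qed

end
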